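(* For $n\ge 3$ and weights $w_1,\dots,w_{n-1}\in(0,1)$, let $H$ be the path $u_1u_2\cdots u_n$ with edge $u_ku_{k+1}$ of weight $w_k$, and define $E_n(w_1,\dots,w_{n-1})=\operatorname{eptw}(H,\{u_1,u_n\})$ (this equals the expected propagation time of a weighted cycle $C_n$ started from two adjacent blue vertices, where $w_1,\dots,w_{n-1}$ are the weights of the other $n-1$ edges listed in order along the cycle from one blue vertex to the other); also set $E_2:=0$ (no arguments). Then $E_3(w_1,w_2)=\frac{1}{w_1+w_2-w_1w_2}$, and for all $n\ge 4$, \[E_n(w_1,\dots,w_{n-1})=\frac{1+w_1(1-w_{n-1})E_{n-1}(w_2,\dots,w_{n-1})+(1-w_1)w_{n-1}E_{n-1}(w_1,\dots,w_{n-2})+w_1w_{n-1}E_{n-2}(w_2,\dots,w_{n-2})}{w_1+w_{n-1}-w_1w_{n-1}}.\] Consequently, for a weighted cycle $C_n$ ($n\ge 3$), $\operatorname{eptw}(C_n)$ is the minimum, over all pairs of adjacent vertices taken as the initial blue set, of the corresponding value $E_n(w_1,\dots,w_{n-1})$.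
   Context: Let $G$ be a finite simple graph in which each edge $uv$ has a weight $w_{uv}\in(0,1)$. Weighted zero forcing: start with a set $B\subseteq V(G)$ of blue vertices, all other vertices white. In each round, simultaneously, for every blue vertex $u$ that has exactly one white neighbor $v$ (with respect to the coloring at the start of the round), $u$ attempts to force $v$, succeeding with probability $w_{uv}$, all attempts being independent; a white vertex becomes blue at the end of the round if at least one attempt on it succeeds. $B$ is a weighted zero forcing set of $G$ if this process can eventually color all of $V(G)$ blue (equivalently, $B$ is a zero forcing set of the underlying unweighted graph under the standard rule); $\operatorname{Z}(G)$ is the minimum size of such a set. $\operatorname{ptw}(G,B)$ is the random variable giving the round in which the last white vertex becomes blue ($0$ if $B=V(G)$); $\operatorname{eptw}(G,B)=\mathbb{E}[\operatorname{ptw}(G,B)]$; $\operatorname{eptw}(G)=\min\{\operatorname{eptw}(G,B): B$ a weighted zero forcing set with $|B|=\operatorname{Z}(G)\}$. *)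

theory Defs
  imports "HOL-Probability.Product_PMF"
begin

text \<open>A weighted graph is given by a finite vertex set V, a symmetric irreflexive
  edge relation E on V and a (symmetric) weight function W on edges.\<close>

definition forcing_pairs :: "'a set \<Rightarrow> ('a \<Rightarrow> 'a \<Rightarrow> bool) \<Rightarrow> 'a set \<Rightarrow> ('a \<times> 'a) set" where
  "forcing_pairs V E B = {(u, v). u \<in> B \<and> v \<in> V - B \<and> E u v \<and>
                                  (\<forall>x \<in> V - B. E u x \<longrightarrow> x = v)}"

definition wzf_step :: "'a set \<Rightarrow> ('a \<Rightarrow> 'a \<Rightarrow> bool) \<Rightarrow> ('a \<Rightarrow> 'a \<Rightarrow> real) \<Rightarrow> 'a set \<Rightarrow> 'a set pmf" where
  "wzf_step V E W B =
     map_pmf (\<lambda>f. B \<union> {v. \<exists>u. (u, v) \<in> forcing_pairs V E B \<and> f (u, v)})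
       (Pi_pmf (forcing_pairs V E B) False (\<lambda>(u, v). bernoulli_pmf (W u v)))"

primrec wzf_state :: "'a set \<Rightarrow> ('a \<Rightarrow> 'a \<Rightarrow> bool) \<Rightarrow> ('a \<Rightarrow> 'a \<Rightarrow> real) \<Rightarrow> 'a set \<Rightarrow> nat \<Rightarrow> 'a set pmf" where
  "wzf_state V E W B 0 = return_pmf B"
| "wzf_state V E W B (Suc k) = bind_pmf (wzf_state V E W B k) (wzf_step V E W)"

definition ptw_gt :: "'a set \<Rightarrow> ('a \<Rightarrow> 'a \<Rightarrow> bool) \<Rightarrow> ('a \<Rightarrow> 'a \<Rightarrow> real) \<Rightarrow> 'a set \<Rightarrow> nat \<Rightarrow> real" where
  "ptw_gt V E W B k = 1 - pmf (wzf_state V E W B k) V"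

text \<open>eptw(G,B) = E[ptw(G,B)] = sum over k of P(ptw(G,B) > k) (ptw is nat-valued).\<close>
definition eptw_set :: "'a set \<Rightarrow> ('a \<Rightarrow> 'a \<Rightarrow> bool) \<Rightarrow> ('a \<Rightarrow> 'a \<Rightarrow> real) \<Rightarrow> 'a set \<Rightarrow> real" where
  "eptw_set V E W B = (\<Sum>k. ptw_gt V E W B k)"

inductive_set zf_closure :: "'a set \<Rightarrow> ('a \<Rightarrow> 'a \<Rightarrow> bool) \<Rightarrow> 'a set \<Rightarrow> 'a set"
  for V E B where
  base: "b \<in> B \<Longrightarrow> b \<in> zf_closure V E B"
| force: "\<lbrakk>u \<in> zf_closure V E B; v \<in> V; E u v;
           \<forall>x \<in> V. E u x \<and> x \<noteq> v \<longrightarrow> x \<in> zf_closure V E B\<rbrakk> \<Longrightarrow> v \<in> zf_closure V E B"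

definition is_zfs :: "'a set \<Rightarrow> ('a \<Rightarrow> 'a \<Rightarrow> bool) \<Rightarrow> 'a set \<Rightarrow> bool" where
  "is_zfs V E B \<longleftrightarrow> B \<subseteq> V \<and> V \<subseteq> zf_closure V E B"

definition zf_number :: "'a set \<Rightarrow> ('a \<Rightarrow> 'a \<Rightarrow> bool) \<Rightarrow> nat" where
  "zf_number V E = Min (card ` {B. is_zfs V E B})"

definition eptw_graph :: "'a set \<Rightarrow> ('a \<Rightarrow> 'a \<Rightarrow> bool) \<Rightarrow> ('a \<Rightarrow> 'a \<Rightarrow> real) \<Rightarrow> real" where
  "eptw_graph V E W = Min (eptw_set V E W ` {B. is_zfs V E B \<and> card B = zf_number V E})"

definition path_V :: "nat \<Rightarrow> nat set" where "path_V n = {..<n}"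
definition path_E :: "nat \<Rightarrow> nat \<Rightarrow> nat \<Rightarrow> bool" where
  "path_E n u v \<longleftrightarrow> u < n \<and> v < n \<and> (v = u + 1 \<or> u = v + 1)"
definition path_W :: "(nat \<Rightarrow> real) \<Rightarrow> nat \<Rightarrow> nat \<Rightarrow> real" where
  "path_W w u v = (if v = u + 1 then w u else if u = v + 1 then w v else 0)"

text \<open>E_n(w_0,...,w_(n-2)) = eptw(path, {first, last}).\<close>
definition E_path :: "nat \<Rightarrow> (nat \<Rightarrow> real) \<Rightarrow> real" where
  "E_path n w = eptw_set (path_V n) (path_E n) (path_W w) {0, n - 1}"

definition cyc_V :: "nat \<Rightarrow> nat set" where "cyc_V n = {..<n}"
definition cyc_E :: "nat \<Rightarrow> nat \<Rightarrow> nat \<Rightarrow> bool" where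
  "cyc_E n u v \<longleftrightarrow> u < n \<and> v < n \<and> u \<noteq> v \<and> (v = (u + 1) mod n \<or> u = (v + 1) mod n)"
definition cyc_W :: "nat \<Rightarrow> (nat \<Rightarrow> real) \<Rightarrow> nat \<Rightarrow> nat \<Rightarrow> real" where
  "cyc_W n c u v = (if v = (u + 1) mod n then c u else if u = (v + 1) mod n then c v else 0)"

end

theory Submission
  imports Defs
begin

text \<open>On a path whose blue set is \<open>{u\<^sub>0,\<dots>,u\<^sub>a} \<union> {u\<^sub>b,\<dots>,u\<^sub>n\<^sub>-\<^sub>1}\<close> with \<open>a + 2 \<le> b\<close>,
  the only forcings are \<open>u\<^sub>a \<rightarrow> u\<^sub>a\<^sub>+\<^sub>1\<close> and \<open>u\<^sub>b \<rightarrow> u\<^sub>b\<^sub>-\<^sub>1\<close>, and they succeed independently.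
  Conditioning on the first round expresses the tail probabilities \<open>P(ptw > k + 1)\<close> of the
  interval \<open>(a, b)\<close> through those of the at most four intervals reachable in one round; summing
  over \<open>k\<close> (which needs summability, obtained by induction on \<open>b - a\<close> from the contraction
  factor \<open>(1 - w\<^sub>a)(1 - w\<^sub>b\<^sub>-\<^sub>1) < 1\<close>) gives the stated linear equation for the expectations.
  The recurrence determines the tail probabilities uniquely, so sub-intervals of a path behave
  like shorter paths, and a cycle started from two adjacent blue vertices behaves like the
  path obtained by deleting the edge between them, whose presence never creates a forcing.
  Finally, two vertices of a cycle force it iff they are adjacent, and no single vertex does,
  so \<open>Z(C\<^sub>n) = 2\<close> and the minimum runs over adjacent pairs.\<close>

lemma wzf_state_Suc_first_step:
  "wzf_state V E W B (Suc k) = bind_pmf (wzf_step V E W B) (\<lambda>B'. wzf_state V E W B' k)"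
proof (induction k)
  case 0
  then show ?case by (simp add: bind_return_pmf bind_return_pmf')
next
  case (Suc k)
  have "wzf_state V E W B (Suc (Suc k)) = bind_pmf (wzf_state V E W B (Suc k)) (wzf_step V E W)"
    by simp
  also have "\<dots> = bind_pmf (wzf_step V E W B) (\<lambda>B'. wzf_state V E W B' (Suc k))"
    by (simp only: Suc) (simp add: bind_assoc_pmf)
  finally show ?case .
qed

lemma wzf_state_no_forcing:
  assumes "forcing_pairs V E B = {}"
  shows "wzf_state V E W B k = return_pmf B"
proof -
  have "wzf_step V E W B = return_pmf B"
    using assms by (simp add: wzf_step_def map_pmf_def bind_return_pmf)
  then show ?thesis by (induction k) (simp_all add: bind_return_pmf)
qed

lemma wzf_step_two_forcings:
  assumes F: "forcing_pairs V E B = {(u1, v1), (u2, v2)}" and ne: "(u1, v1) \<noteq> (u2, v2)"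
  shows "wzf_step V E W B =
    bind_pmf (bernoulli_pmf (W u1 v1)) (\<lambda>s. bind_pmf (bernoulli_pmf (W u2 v2))
      (\<lambda>t. return_pmf (B \<union> {x. (x = v1 \<and> s) \<or> (x = v2 \<and> t)})))"
proof -
  let ?P = "\<lambda>(u, v). bernoulli_pmf (W u v)"
  have "Pi_pmf {(u1, v1), (u2, v2)} False ?P =
     bind_pmf (?P (u1, v1)) (\<lambda>s. bind_pmf (Pi_pmf {(u2, v2)} False ?P)
       (\<lambda>f. return_pmf (f((u1, v1) := s))))"
    using ne by (subst Pi_pmf_insert') auto
  also have "Pi_pmf {(u2, v2)} False ?P =
      bind_pmf (?P (u2, v2)) (\<lambda>t. return_pmf ((\<lambda>_. False)((u2, v2) := t)))"
    by (subst Pi_pmf_insert') (auto simp: bind_return_pmf)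
  finally have "Pi_pmf {(u1, v1), (u2, v2)} False ?P =
      bind_pmf (bernoulli_pmf (W u1 v1)) (\<lambda>s. bind_pmf (bernoulli_pmf (W u2 v2))
        (\<lambda>t. return_pmf ((\<lambda>_. False)((u2, v2) := t, (u1, v1) := s))))"
    by (simp add: bind_assoc_pmf bind_return_pmf) (intro bind_pmf_cong refl; auto simp: fun_eq_iff)
  then show ?thesis
    unfolding wzf_step_def F using ne
    by (simp add: map_bind_pmf) (intro bind_pmf_cong refl; auto)
qed

lemma pmf_bind_bernoulli:
  assumes "0 \<le> p" "p \<le> 1"
  shows "pmf (bind_pmf (bernoulli_pmf p) f) x = p * pmf (f True) x + (1 - p) * pmf (f False) x"
  using assms by (simp add: pmf_bind)

lemma ptw_gt_Suc_two_forcings: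
  assumes F: "forcing_pairs V E B = {(u1, v1), (u2, v2)}" and ne: "(u1, v1) \<noteq> (u2, v2)"
    and p: "0 \<le> W u1 v1" "W u1 v1 \<le> 1" and q: "0 \<le> W u2 v2" "W u2 v2 \<le> 1"
  shows "ptw_gt V E W B (Suc k) =
      W u1 v1 * W u2 v2 * ptw_gt V E W (B \<union> {v1, v2}) k
    + W u1 v1 * (1 - W u2 v2) * ptw_gt V E W (B \<union> {v1}) k
    + (1 - W u1 v1) * W u2 v2 * ptw_gt V E W (B \<union> {v2}) k
    + (1 - W u1 v1) * (1 - W u2 v2) * ptw_gt V E W B k"
proof -
  have "wzf_state V E W B (Suc k) =
      bind_pmf (bernoulli_pmf (W u1 v1)) (\<lambda>s. bind_pmf (bernoulli_pmf (W u2 v2))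
        (\<lambda>t. wzf_state V E W (B \<union> {x. (x = v1 \<and> s) \<or> (x = v2 \<and> t)}) k))"
    by (simp only: wzf_state_Suc_first_step wzf_step_two_forcings[OF F ne]
        bind_assoc_pmf bind_return_pmf)
  moreover have "{x. x = v1 \<or> x = v2} = {v1, v2}" "{x. x = v1} = {v1}" "{x. x = v2} = {v2}"
    by auto
  ultimately show ?thesis
    unfolding ptw_gt_def using p q by (simp add: pmf_bind_bernoulli algebra_simps)
qed

lemma ptw_gt_all_blue: "ptw_gt V E W V k = 0"
  by (simp add: ptw_gt_def wzf_state_no_forcing forcing_pairs_def)

lemma ptw_gt_0: "B \<noteq> V \<Longrightarrow> ptw_gt V E W B 0 = 1"
  by (simp add: ptw_gt_def)

subsection \<open>A recurrence indexed by intervals\<close>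

text \<open>\<open>G a b k\<close> plays the role of \<open>P(ptw > k)\<close> on a path \<open>u\<^sub>0 \<dots> u\<^sub>n\<^sub>-\<^sub>1\<close> whose white
  vertices are exactly \<open>u\<^sub>a\<^sub>+\<^sub>1, \<dots>, u\<^sub>b\<^sub>-\<^sub>1\<close>, with edge weights \<open>w\<close>.\<close>

definition tail_recurrence :: "(nat \<Rightarrow> real) \<Rightarrow> (nat \<Rightarrow> nat \<Rightarrow> nat \<Rightarrow> real) \<Rightarrow> nat \<Rightarrow> bool" where
  "tail_recurrence w G n \<longleftrightarrow>
     (\<forall>a b k. b < n \<longrightarrow> b \<le> a + 1 \<longrightarrow> G a b k = 0) \<and>
     (\<forall>a b. b < n \<longrightarrow> a + 2 \<le> b \<longrightarrow> G a b 0 = 1) \<and>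
     (\<forall>a b k. b < n \<longrightarrow> a + 2 \<le> b \<longrightarrow> G a b (Suc k) =
          w a * w (b - 1) * G (a + 1) (b - 1) k + w a * (1 - w (b - 1)) * G (a + 1) b k
        + (1 - w a) * w (b - 1) * G a (b - 1) k + (1 - w a) * (1 - w (b - 1)) * G a b k)"

lemma tail_recurrence_SucD:
  assumes "tail_recurrence w G n" "b < n" "a + 2 \<le> b"
  shows "G a b (Suc k) =
          w a * w (b - 1) * G (a + 1) (b - 1) k + w a * (1 - w (b - 1)) * G (a + 1) b k
        + (1 - w a) * w (b - 1) * G a (b - 1) k + (1 - w a) * (1 - w (b - 1)) * G a b k"
  using assms unfolding tail_recurrence_def by blast

lemma tail_recurrence_unique:
  assumes "tail_recurrence w G1 n" "tail_recurrence w G2 m" "b < n" "b < m"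
  shows "G1 a b k = G2 a b k"
  using assms(3,4)
proof (induction k arbitrary: a b)
  case 0
  then show ?case using assms(1,2) unfolding tail_recurrence_def by (cases "b \<le> a + 1") auto
next
  case (Suc k)
  show ?case
  proof (cases "b \<le> a + 1")
    case True
    then show ?thesis using assms(1,2) Suc.prems unfolding tail_recurrence_def by auto
  next
    case False
    then show ?thesis
      using tail_recurrence_SucD[OF assms(1) Suc.prems(1)] tail_recurrence_SucD[OF assms(2) Suc.prems(2)]
        Suc by simp
  qed
qed

lemma tail_recurrence_shift:
  assumes "tail_recurrence w G n"
  shows "tail_recurrence (\<lambda>i. w (i + s)) (\<lambda>a b k. G (a + s) (b + s) k) (n - s)"
  unfolding tail_recurrence_def
proof (intro conjI allI impI)
  fix a b k assume "b < n - s" "b \<le> a + 1"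
  then show "G (a + s) (b + s) k = 0" using assms unfolding tail_recurrence_def by auto
next
  fix a b assume "b < n - s" "a + 2 \<le> b"
  then show "G (a + s) (b + s) 0 = 1" using assms unfolding tail_recurrence_def by auto
next
  fix a b k assume "b < n - s" "a + 2 \<le> b"
  moreover from this have "b + s - 1 = b - 1 + s" by simp
  ultimately show "G (a + s) (b + s) (Suc k) =
      w (a + s) * w (b - 1 + s) * G (a + 1 + s) (b - 1 + s) k
    + w (a + s) * (1 - w (b - 1 + s)) * G (a + 1 + s) (b + s) k
    + (1 - w (a + s)) * w (b - 1 + s) * G (a + s) (b - 1 + s) k
    + (1 - w (a + s)) * (1 - w (b - 1 + s)) * G (a + s) (b + s) k"
    using tail_recurrence_SucD[OF assms, of "b + s" "a + s" k] by (simp add: algebra_simps)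
qed

lemma tail_recurrence_nonneg:
  assumes R: "tail_recurrence w G n" and W: "\<forall>i<n - 1. 0 \<le> w i \<and> w i \<le> 1" and "b < n"
  shows "0 \<le> G a b k"
  using \<open>b < n\<close>
proof (induction k arbitrary: a b)
  case 0
  then show ?case using R unfolding tail_recurrence_def by (cases "b \<le> a + 1") auto
next
  case (Suc k)
  show ?case
  proof (cases "b \<le> a + 1")
    case True
    then show ?thesis using R Suc.prems unfolding tail_recurrence_def by auto
  next
    case False
    then have "0 \<le> w a" "w a \<le> 1" "0 \<le> w (b - 1)" "w (b - 1) \<le> 1" using W Suc.prems by auto
    moreover have "0 \<le> G (a + 1) (b - 1) k" "0 \<le> G (a + 1) b k" "0 \<le> G a (b - 1) k" "0 \<le> G a b k"
      using Suc by auto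
    moreover have "a + 2 \<le> b" using False by simp
    ultimately show ?thesis
      unfolding tail_recurrence_SucD[OF R Suc.prems \<open>a + 2 \<le> b\<close>]
      by (intro add_nonneg_nonneg mult_nonneg_nonneg) auto
  qed
qed

lemma summable_if_contracting:
  fixes f c :: "nat \<Rightarrow> real"
  assumes f0: "\<And>k. 0 \<le> f k" and c0: "\<And>k. 0 \<le> c k" and q: "0 \<le> q" "q < 1"
    and c: "summable c" and contr: "\<And>k. f (Suc k) \<le> q * f k + c k"
  shows "summable f"
proof (rule summableI_nonneg_bounded[where x = "(f 0 + suminf c) / (1 - q)"])
  fix N
  have "(\<Sum>i<Suc N. f i) = f 0 + (\<Sum>i<N. f (Suc i))" by (rule sum.lessThan_Suc_shift)
  also have "\<dots> \<le> f 0 + (\<Sum>i<N. q * f i + c i)" by (intro add_left_mono sum_mono contr)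
  also have "\<dots> = f 0 + q * (\<Sum>i<N. f i) + (\<Sum>i<N. c i)" by (simp add: sum.distrib sum_distrib_left)
  also have "(\<Sum>i<N. c i) \<le> suminf c" using c c0 by (intro sum_le_suminf) auto
  also have "q * (\<Sum>i<N. f i) \<le> q * (\<Sum>i<Suc N. f i)" using q f0 by (intro mult_left_mono) auto
  finally have "(1 - q) * (\<Sum>i<Suc N. f i) \<le> f 0 + suminf c" by (simp add: algebra_simps)
  then have "(\<Sum>i<Suc N. f i) \<le> (f 0 + suminf c) / (1 - q)" using q by (simp add: field_simps)
  moreover have "(\<Sum>i<N. f i) \<le> (\<Sum>i<Suc N. f i)" using f0 by simp
  ultimately show "(\<Sum>i<N. f i) \<le> (f 0 + suminf c) / (1 - q)" by linarith
qed (rule f0)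

lemma tail_recurrence_summable:
  assumes R: "tail_recurrence w G n" and W: "\<forall>i<n - 1. 0 < w i \<and> w i < 1" and "b < n"
  shows "summable (G a b)"
  using \<open>b < n\<close>
proof (induction "b - a" arbitrary: a b rule: less_induct)
  case less
  have W': "\<forall>i<n - 1. 0 \<le> w i \<and> w i \<le> 1" using W by (simp add: less_imp_le)
  show ?case
  proof (cases "b \<le> a + 1")
    case True
    then have "G a b = (\<lambda>k. 0)" using R less.prems unfolding tail_recurrence_def by auto
    then show ?thesis by simp
  next
    case False
    then have wa: "0 < w a" "w a < 1" "0 < w (b - 1)" "w (b - 1) < 1" using W less.prems by auto
    let ?q = "(1 - w a) * (1 - w (b - 1))"
    let ?c = "\<lambda>k. w a * w (b - 1) * G (a + 1) (b - 1) k + w a * (1 - w (b - 1)) * G (a + 1) b k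
      + (1 - w a) * w (b - 1) * G a (b - 1) k"
    have "b - 1 < n" "b - 1 - (a + 1) < b - a" "b - (a + 1) < b - a" "b - 1 - a < b - a"
      using less.prems False by auto
    then have "summable (G (a + 1) (b - 1))" "summable (G (a + 1) b)" "summable (G a (b - 1))"
      using less.hyps less.prems by blast+
    then have c: "summable ?c" by (intro summable_add summable_mult)
    have c0: "0 \<le> ?c k" for k
      using tail_recurrence_nonneg[OF R W', of "b - 1"] tail_recurrence_nonneg[OF R W', of b]
        less.prems wa by (intro add_nonneg_nonneg mult_nonneg_nonneg) auto
    have contr: "G a b (Suc k) \<le> ?q * G a b k + ?c k" for k
      using tail_recurrence_SucD[OF R less.prems, of a k] False by simp
    have "?q \<le> 1 - w a" using wa by (intro mult_left_le) auto
    then have q: "0 \<le> ?q" "?q < 1" using wa by (simp, linarith)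
    show ?thesis
      by (rule summable_if_contracting[OF _ c0 q c contr])
        (rule tail_recurrence_nonneg[OF R W' less.prems])
  qed
qed

lemma tail_recurrence_suminf:
  assumes R: "tail_recurrence w G n" and W: "\<forall>i<n - 1. 0 < w i \<and> w i < 1"
    and b: "b < n" "a + 2 \<le> b"
  shows "suminf (G a b) * (w a + w (b - 1) - w a * w (b - 1)) =
     1 + w a * w (b - 1) * suminf (G (a + 1) (b - 1)) + w a * (1 - w (b - 1)) * suminf (G (a + 1) b)
    + (1 - w a) * w (b - 1) * suminf (G a (b - 1))"
proof -
  let ?A = "w a * w (b - 1)" and ?B = "w a * (1 - w (b - 1))" and ?C = "(1 - w a) * w (b - 1)"
    and ?D = "(1 - w a) * (1 - w (b - 1))"
  have s: "summable (G (a + 1) (b - 1))" "summable (G (a + 1) b)" "summable (G a (b - 1))"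
    "summable (G a b)"
    using tail_recurrence_summable[OF R W b(1)] tail_recurrence_summable[OF R W, of "b - 1"] b(1)
    by auto
  have "(\<lambda>k. G a b (Suc k)) sums (?A * suminf (G (a + 1) (b - 1)) + ?B * suminf (G (a + 1) b)
      + ?C * suminf (G a (b - 1)) + ?D * suminf (G a b))"
    unfolding tail_recurrence_SucD[OF R b] by (intro sums_add sums_mult summable_sums s)
  moreover have "G a b 0 = 1" using R b unfolding tail_recurrence_def by blast
  ultimately have "suminf (G a b) = 1 + (?A * suminf (G (a + 1) (b - 1)) + ?B * suminf (G (a + 1) b)
      + ?C * suminf (G a (b - 1)) + ?D * suminf (G a b))"
    using suminf_split_head[OF s(4)] sums_unique by fastforce
  then show ?thesis by (simp add: algebra_simps)
qed

subsection \<open>Paths\<close>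

definition ends_blue :: "nat \<Rightarrow> nat \<Rightarrow> nat \<Rightarrow> nat set" where
  "ends_blue n a b = {x. x < n \<and> (x \<le> a \<or> b \<le> x)}"

definition path_tail :: "nat \<Rightarrow> (nat \<Rightarrow> real) \<Rightarrow> nat \<Rightarrow> nat \<Rightarrow> nat \<Rightarrow> real" where
  "path_tail n w a b k = ptw_gt (path_V n) (path_E n) (path_W w) (ends_blue n a b) k"

lemma ends_blue_insert:
  assumes "a + 2 \<le> b" "b < n"
  shows "ends_blue n a b \<union> {a + 1, b - 1} = ends_blue n (a + 1) (b - 1)"
    and "ends_blue n a b \<union> {a + 1} = ends_blue n (a + 1) b"
    and "ends_blue n a b \<union> {b - 1} = ends_blue n a (b - 1)"
  using assms by (auto simp: ends_blue_def)

lemma path_forcing_pairs_ends_blue: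
  assumes "a + 2 \<le> b" "b < n"
  shows "forcing_pairs (path_V n) (path_E n) (ends_blue n a b) = {(a, a + 1), (b, b - 1)}"
proof (intro equalityI subsetI)
  fix p assume "p \<in> forcing_pairs (path_V n) (path_E n) (ends_blue n a b)"
  then obtain u v where p: "p = (u, v)" and "u \<in> ends_blue n a b"
    and "v \<in> path_V n - ends_blue n a b" and "path_E n u v"
    unfolding forcing_pairs_def by blast
  then have "u \<le> a \<or> b \<le> u" "a < v" "v < b" "v = u + 1 \<or> u = v + 1"
    by (auto simp: ends_blue_def path_V_def path_E_def)
  then have "(u = a \<and> v = a + 1) \<or> (u = b \<and> v = b - 1)" by linarith
  then show "p \<in> {(a, a + 1), (b, b - 1)}" using p by auto
next
  fix p assume "p \<in> {(a, a + 1), (b, b - 1)}"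
  then show "p \<in> forcing_pairs (path_V n) (path_E n) (ends_blue n a b)"
    using assms by (auto simp: forcing_pairs_def ends_blue_def path_V_def path_E_def)
qed

lemma tail_recurrence_path_tail:
  assumes W: "\<forall>i<n - 1. 0 \<le> w i \<and> w i \<le> 1"
  shows "tail_recurrence w (path_tail n w) n"
  unfolding tail_recurrence_def
proof (intro conjI allI impI)
  fix a b k assume "b < n" "b \<le> a + 1"
  then have "ends_blue n a b = path_V n" by (auto simp: ends_blue_def path_V_def)
  then show "path_tail n w a b k = 0" by (simp add: path_tail_def ptw_gt_all_blue)
next
  fix a b assume "b < n" "a + 2 \<le> b"
  then have "a + 1 \<in> path_V n - ends_blue n a b" by (auto simp: ends_blue_def path_V_def)
  then have "ends_blue n a b \<noteq> path_V n" by blast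
  then show "path_tail n w a b 0 = 1" by (simp add: path_tail_def ptw_gt_0)
next
  fix a b k assume h: "b < n" "a + 2 \<le> b"
  have "path_W w a (a + 1) = w a" "path_W w b (b - 1) = w (b - 1)"
    using h by (auto simp: path_W_def)
  moreover have "0 \<le> w a" "w a \<le> 1" "0 \<le> w (b - 1)" "w (b - 1) \<le> 1" using W h by auto
  ultimately show "path_tail n w a b (Suc k) =
      w a * w (b - 1) * path_tail n w (a + 1) (b - 1) k + w a * (1 - w (b - 1)) * path_tail n w (a + 1) b k
    + (1 - w a) * w (b - 1) * path_tail n w a (b - 1) k
    + (1 - w a) * (1 - w (b - 1)) * path_tail n w a b k"
    using ptw_gt_Suc_two_forcings[OF path_forcing_pairs_ends_blue[OF h(2,1)], of "path_W w" k] h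
    unfolding path_tail_def ends_blue_insert[OF h(2,1)] by simp
qed

lemma ends_blue_0_last: "0 < n \<Longrightarrow> ends_blue n 0 (n - 1) = {0, n - 1}"
  by (auto simp: ends_blue_def)

lemma E_path_eq_suminf: "0 < n \<Longrightarrow> E_path n w = suminf (path_tail n w 0 (n - 1))"
  unfolding E_path_def path_tail_def[abs_def] ends_blue_0_last[symmetric] by (simp add: eptw_set_def)

lemma E_path_subpath:
  assumes m: "0 < m" "a + m = b + 1" and "b < n" and W: "\<forall>i<n - 1. 0 \<le> w i \<and> w i \<le> 1"
  shows "E_path m (\<lambda>i. w (i + a)) = suminf (path_tail n w a b)"
proof -
  let ?w = "\<lambda>i. w (i + a)"
  have shifted: "tail_recurrence ?w (\<lambda>x y k. path_tail n w (x + a) (y + a) k) (n - a)"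
    by (rule tail_recurrence_shift[OF tail_recurrence_path_tail[OF W]])
  have "\<forall>i<m - 1. 0 \<le> ?w i \<and> ?w i \<le> 1" using W m \<open>b < n\<close> by simp
  then have sub: "tail_recurrence ?w (path_tail m ?w) m" by (rule tail_recurrence_path_tail)
  have "m - 1 < n - a" "m - 1 < m" "m - 1 + a = b" using m \<open>b < n\<close> by auto
  then have "path_tail m ?w 0 (m - 1) = path_tail n w a b"
    using tail_recurrence_unique[OF sub shifted, of "m - 1" 0] by auto
  then show ?thesis using E_path_eq_suminf[OF m(1), of ?w] by simp
qed

lemma E_path_eq_0_if_le_2:
  assumes "0 < n" "n \<le> 2"
  shows "E_path n w = 0"
proof -
  have "{0, n - 1} = path_V n" using assms by (auto simp: path_V_def)
  then show ?thesis by (simp add: E_path_def eptw_set_def ptw_gt_all_blue)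
qed

lemma E_path_recursion:
  assumes n: "3 \<le> n" and W: "\<forall>i<n - 1. 0 < w i \<and> w i < 1"
  shows "E_path n w =
          (1 + w 0 * (1 - w (n - 2)) * E_path (n - 1) (\<lambda>i. w (i + 1))
             + (1 - w 0) * w (n - 2) * E_path (n - 1) w
             + w 0 * w (n - 2) * E_path (n - 2) (\<lambda>i. w (i + 1)))
          / (w 0 + w (n - 2) - w 0 * w (n - 2))"
proof -
  let ?T = "path_tail n w"
  have W': "\<forall>i<n - 1. 0 \<le> w i \<and> w i \<le> 1" using W by (simp add: less_imp_le)
  have "E_path n w = suminf (?T 0 (n - 1))"
    using E_path_subpath[OF _ _ _ W', of n 0 "n - 1"] n by simp
  moreover have "E_path (n - 1) (\<lambda>i. w (i + 1)) = suminf (?T 1 (n - 1))"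
    using E_path_subpath[OF _ _ _ W', of "n - 1" 1 "n - 1"] n by simp
  moreover have "E_path (n - 1) w = suminf (?T 0 (n - 2))"
  proof -
    have "0 < n - 1" "0 + (n - 1) = n - 2 + 1" "n - 2 < n" using n by auto
    from E_path_subpath[OF this W'] show ?thesis by simp
  qed
  moreover have "E_path (n - 2) (\<lambda>i. w (i + 1)) = suminf (?T 1 (n - 2))"
    using E_path_subpath[OF _ _ _ W', of "n - 2" 1 "n - 2"] n by simp
  moreover have "suminf (?T 0 (n - 1)) * (w 0 + w (n - 2) - w 0 * w (n - 2)) =
     1 + w 0 * w (n - 2) * suminf (?T 1 (n - 2)) + w 0 * (1 - w (n - 2)) * suminf (?T 1 (n - 1))
    + (1 - w 0) * w (n - 2) * suminf (?T 0 (n - 2))"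
    using tail_recurrence_suminf[OF tail_recurrence_path_tail[OF W'] W, of "n - 1" 0] n
    by (simp add: numeral_eq_Suc)
  moreover have "0 < w 0 + w (n - 2) - w 0 * w (n - 2)"
  proof -
    have "0 < w 0" "0 < w (n - 2)" "w (n - 2) < 1" using W n by auto
    then have "w 0 * w (n - 2) < w 0" using mult_strict_left_mono[of "w (n - 2)" 1 "w 0"] by simp
    with \<open>0 < w (n - 2)\<close> show ?thesis by linarith
  qed
  ultimately show ?thesis by (simp add: field_simps)
qed

subsection \<open>Cycles\<close>

text \<open>\<open>rot n j\<close> maps the path \<open>0, \<dots>, n - 1\<close> onto the cycle read from \<open>j + 1\<close> round to \<open>j\<close>.\<close>

definition rot :: "nat \<Rightarrow> nat \<Rightarrow> nat \<Rightarrow> nat" where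
  "rot n j x = (j + 1 + x) mod n"

lemma rot_eq: "j < n \<Longrightarrow> x < n \<Longrightarrow> rot n j x = (if j + 1 + x < n then j + 1 + x else j + 1 + x - n)"
  by (auto simp: rot_def le_mod_geq)

lemma add_1_mod_eq: "(u::nat) < n \<Longrightarrow> (u + 1) mod n = (if u + 1 = n then 0 else u + 1)"
  by auto

lemma cyc_E_iff: "(u::nat) < n \<Longrightarrow> v < n \<Longrightarrow> cyc_E n u v \<longleftrightarrow>
   u \<noteq> v \<and> (v = u + 1 \<or> u = v + 1 \<or> (u + 1 = n \<and> v = 0) \<or> (v + 1 = n \<and> u = 0))"
  unfolding cyc_E_def using add_1_mod_eq[of u n] add_1_mod_eq[of v n] by auto

lemma rot_lt: "j < n \<Longrightarrow> rot n j x < n"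
  by (simp add: rot_def)

lemma rot_eq_iff: "j < n \<Longrightarrow> x < n \<Longrightarrow> y < n \<Longrightarrow> rot n j x = rot n j y \<longleftrightarrow> x = y"
  using rot_eq[of j n x] rot_eq[of j n y] by auto

lemma rot_surj:
  assumes "j < n" "v < n"
  shows "\<exists>x<n. v = rot n j x"
proof (cases "j + 1 \<le> v")
  case True
  then show ?thesis using assms rot_eq[of j n "v - (j + 1)"] by (intro exI[of _ "v - (j + 1)"]) auto
next
  case False
  then show ?thesis
    using assms rot_eq[of j n "v + n - (j + 1)"] by (intro exI[of _ "v + n - (j + 1)"]) auto
qed

lemma rot_image: "j < n \<Longrightarrow> rot n j ` {..<n} = {..<n}"
  using rot_lt rot_surj by fastforce

lemma rot_mem_image_iff:
  "j < n \<Longrightarrow> x < n \<Longrightarrow> S \<subseteq> {..<n} \<Longrightarrow> rot n j x \<in> rot n j ` S \<longleftrightarrow> x \<in> S"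
  using rot_eq_iff by blast

lemma rot_0: "rot n j 0 = (j + 1) mod n"
  by (simp add: rot_def)

lemma rot_last: "j < n \<Longrightarrow> rot n j (n - 1) = j"
  by (simp add: rot_def)

lemma rot_add_mod: "(rot n j x + k) mod n = rot n j (x + k)"
  unfolding rot_def by (simp add: mod_add_left_eq add.assoc)

lemma rot_mod: "rot n j (x mod n) = rot n j x"
  unfolding rot_def by (rule mod_add_right_eq)

lemma cyc_E_rot_iff:
  assumes "3 \<le> n" "j < n" "x < n" "y < n"
  shows "cyc_E n (rot n j x) (rot n j y) \<longleftrightarrow>
    path_E n x y \<or> (x = 0 \<and> y = n - 1) \<or> (x = n - 1 \<and> y = 0)"
  unfolding cyc_E_iff[OF rot_lt[OF assms(2)] rot_lt[OF assms(2)]]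
  unfolding rot_eq[OF assms(2,3)] rot_eq[OF assms(2,4)] path_E_def
  using assms by (simp split: if_splits; arith)

lemma cyc_W_rot:
  assumes n: "3 \<le> n" "j < n" and "path_E n x y"
  shows "cyc_W n c (rot n j x) (rot n j y) = path_W (\<lambda>i. c (rot n j i)) x y"
proof -
  have xy: "x < n" "y < n" "y = x + 1 \<or> x = y + 1" using \<open>path_E n x y\<close> by (auto simp: path_E_def)
  show ?thesis
  proof (cases "y = x + 1")
    case True
    then have "rot n j y = (rot n j x + 1) mod n" by (simp only: rot_add_mod)
    then show ?thesis by (simp add: cyc_W_def path_W_def True)
  next
    case False
    then have yx: "x = y + 1" using xy by simp
    have eq: "rot n j (y + 1) = (rot n j y + 1) mod n" by (simp only: rot_add_mod)
    have "(y + 2) mod n \<noteq> y" "(y + 2) mod n < n"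
      using n xy yx by (auto simp: mod_if)
    then have "rot n j y \<noteq> rot n j ((y + 2) mod n)" using rot_eq_iff[OF n(2) xy(2)] by simp
    then have ne: "rot n j y \<noteq> (rot n j (y + 1) + 1) mod n"
      unfolding rot_mod rot_add_mod by (simp add: add.assoc)
    show ?thesis unfolding yx cyc_W_def path_W_def using eq ne by simp
  qed
qed

lemma rot_forcing_pair_iff:
  assumes n: "3 \<le> n" "j < n" and S: "S \<subseteq> {..<n}" "0 \<in> S" "n - 1 \<in> S" and "x < n" "y < n"
  shows "(rot n j x, rot n j y) \<in> forcing_pairs (cyc_V n) (cyc_E n) (rot n j ` S) \<longleftrightarrow>
    (x, y) \<in> forcing_pairs (path_V n) (path_E n) S"
proof -
  have "inj_on (rot n j) {..<n}" using rot_eq_iff[OF n(2)] by (auto intro: inj_onI)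
  then have white: "cyc_V n - rot n j ` S = rot n j ` (path_V n - S)"
    using inj_on_image_set_diff[of "rot n j" "{..<n}" "{..<n}" S] S rot_image[OF n(2)]
    by (simp add: cyc_V_def path_V_def)
  have edge: "cyc_E n (rot n j x) (rot n j z) \<longleftrightarrow> path_E n x z" if "z \<in> path_V n - S" for z
    using cyc_E_rot_iff[OF n \<open>x < n\<close>, of z] that S by (auto simp: path_V_def path_E_def)
  show ?thesis
    unfolding forcing_pairs_def white
    using edge rot_mem_image_iff[OF n(2) _ S(1)] rot_eq_iff[OF n(2)] assms(6,7) S(1)
    by (auto simp: path_V_def)
qed

text \<open>Since both ends of the path are blue, the extra cycle edge never carries a forcing.\<close>

lemma cyc_forcing_pairs_rot_image:
  assumes n: "3 \<le> n" "j < n" and S: "S \<subseteq> {..<n}" "0 \<in> S" "n - 1 \<in> S"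
  shows "forcing_pairs (cyc_V n) (cyc_E n) (rot n j ` S) =
     (\<lambda>(x, y). (rot n j x, rot n j y)) ` forcing_pairs (path_V n) (path_E n) S"
proof (intro equalityI subsetI)
  fix p assume p: "p \<in> forcing_pairs (cyc_V n) (cyc_E n) (rot n j ` S)"
  then obtain x v where xv: "p = (rot n j x, v)" "x \<in> S" "v < n"
    unfolding forcing_pairs_def cyc_V_def by blast
  obtain y where "y < n" "v = rot n j y" using rot_surj[OF n(2) xv(3)] by blast
  moreover have "x < n" using xv(2) S(1) by blast
  ultimately have "(x, y) \<in> forcing_pairs (path_V n) (path_E n) S"
    using p xv(1) rot_forcing_pair_iff[OF n S] by simp
  then show "p \<in> (\<lambda>(x, y). (rot n j x, rot n j y)) ` forcing_pairs (path_V n) (path_E n) S"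
    using xv(1) \<open>v = rot n j y\<close> by (intro image_eqI[where x = "(x, y)"]) simp_all
next
  fix p assume "p \<in> (\<lambda>(x, y). (rot n j x, rot n j y)) ` forcing_pairs (path_V n) (path_E n) S"
  then obtain x y where "p = (rot n j x, rot n j y)" "(x, y) \<in> forcing_pairs (path_V n) (path_E n) S"
    by auto
  moreover from this have "x < n" "y < n" using S(1) by (auto simp: forcing_pairs_def path_V_def)
  ultimately show "p \<in> forcing_pairs (cyc_V n) (cyc_E n) (rot n j ` S)"
    using rot_forcing_pair_iff[OF n S] by simp
qed

definition cyc_tail :: "nat \<Rightarrow> (nat \<Rightarrow> real) \<Rightarrow> nat \<Rightarrow> nat \<Rightarrow> nat \<Rightarrow> nat \<Rightarrow> real" where
  "cyc_tail n c j a b k = ptw_gt (cyc_V n) (cyc_E n) (cyc_W n c) (rot n j ` ends_blue n a b) k"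

lemma tail_recurrence_cyc_tail:
  assumes n: "3 \<le> n" "j < n" and C: "\<forall>i<n. 0 \<le> c i \<and> c i \<le> 1"
  shows "tail_recurrence (\<lambda>i. c (rot n j i)) (cyc_tail n c j) n"
  unfolding tail_recurrence_def
proof (intro conjI allI impI)
  fix a b k assume "b < n" "b \<le> a + 1"
  then have "ends_blue n a b = {..<n}" by (auto simp: ends_blue_def)
  then have "rot n j ` ends_blue n a b = cyc_V n" using rot_image[OF n(2)] by (simp add: cyc_V_def)
  then show "cyc_tail n c j a b k = 0" by (simp add: cyc_tail_def ptw_gt_all_blue)
next
  fix a b assume "b < n" "a + 2 \<le> b"
  then have "rot n j (a + 1) \<in> cyc_V n - rot n j ` ends_blue n a b"
    using rot_mem_image_iff[OF n(2), of "a + 1" "ends_blue n a b"] rot_lt[OF n(2)]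
    by (auto simp: ends_blue_def cyc_V_def)
  then have "rot n j ` ends_blue n a b \<noteq> cyc_V n" by blast
  then show "cyc_tail n c j a b 0 = 1" by (simp add: cyc_tail_def ptw_gt_0)
next
  fix a b k assume h: "b < n" "a + 2 \<le> b"
  let ?f = "rot n j" and ?w = "\<lambda>i. c (rot n j i)"
  have S: "ends_blue n a b \<subseteq> {..<n}" "0 \<in> ends_blue n a b" "n - 1 \<in> ends_blue n a b"
    using h by (auto simp: ends_blue_def)
  have fp: "forcing_pairs (cyc_V n) (cyc_E n) (?f ` ends_blue n a b) =
      {(?f a, ?f (a + 1)), (?f b, ?f (b - 1))}"
    unfolding cyc_forcing_pairs_rot_image[OF n S] path_forcing_pairs_ends_blue[OF h(2,1)] by simp
  have ne: "(?f a, ?f (a + 1)) \<noteq> (?f b, ?f (b - 1))" using rot_eq_iff[OF n(2), of a b] h by simp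
  have "path_E n a (a + 1)" "path_E n b (b - 1)" using h by (auto simp: path_E_def)
  then have w: "cyc_W n c (?f a) (?f (a + 1)) = ?w a" "cyc_W n c (?f b) (?f (b - 1)) = ?w (b - 1)"
    using cyc_W_rot[OF n, of a "a + 1" c] cyc_W_rot[OF n, of b "b - 1" c] h
    by (auto simp: path_W_def)
  have "0 \<le> ?w a" "?w a \<le> 1" "0 \<le> ?w (b - 1)" "?w (b - 1) \<le> 1"
    using C rot_lt[OF n(2)] by auto
  then show "cyc_tail n c j a b (Suc k) =
      ?w a * ?w (b - 1) * cyc_tail n c j (a + 1) (b - 1) k
    + ?w a * (1 - ?w (b - 1)) * cyc_tail n c j (a + 1) b k
    + (1 - ?w a) * ?w (b - 1) * cyc_tail n c j a (b - 1) k
    + (1 - ?w a) * (1 - ?w (b - 1)) * cyc_tail n c j a b k"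
    using ptw_gt_Suc_two_forcings[OF fp ne, of "cyc_W n c" k]
    unfolding cyc_tail_def w ends_blue_insert(1,2,3)[OF h(2,1), symmetric] by simp
qed

lemma eptw_set_cycle_adjacent:
  assumes n: "3 \<le> n" "j < n" and C: "\<forall>i<n. 0 < c i \<and> c i < 1"
  shows "eptw_set (cyc_V n) (cyc_E n) (cyc_W n c) {j, (j + 1) mod n} =
    E_path n (\<lambda>i. c ((j + 1 + i) mod n))"
proof -
  let ?w = "\<lambda>i. c (rot n j i)"
  have C': "\<forall>i<n. 0 \<le> c i \<and> c i \<le> 1" using C by (simp add: less_imp_le)
  then have "\<forall>i<n - 1. 0 \<le> ?w i \<and> ?w i \<le> 1" using rot_lt[OF n(2)] by blast
  then have "cyc_tail n c j 0 (n - 1) = path_tail n ?w 0 (n - 1)"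
    using tail_recurrence_unique[OF tail_recurrence_cyc_tail[OF n C'] tail_recurrence_path_tail] n
    by auto
  moreover have "{j, (j + 1) mod n} = rot n j ` ends_blue n 0 (n - 1)"
    using ends_blue_0_last[of n] rot_last[OF n(2)] n by (auto simp: rot_0)
  ultimately have "eptw_set (cyc_V n) (cyc_E n) (cyc_W n c) {j, (j + 1) mod n} =
      suminf (path_tail n ?w 0 (n - 1))"
    unfolding eptw_set_def cyc_tail_def[abs_def] by simp
  also have "\<dots> = E_path n ?w" using E_path_eq_suminf n by simp
  finally show ?thesis by (simp add: rot_def)
qed

subsection \<open>Minimum zero forcing sets of a cycle\<close>

lemma zf_closure_subset_if_blocked:
  assumes "\<forall>u\<in>B. \<forall>v. \<exists>x\<in>V - B. E u x \<and> x \<noteq> v"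
  shows "zf_closure V E B \<subseteq> B"
proof
  fix y assume "y \<in> zf_closure V E B"
  then show "y \<in> B"
  proof (induction rule: zf_closure.induct)
    case (force u v)
    then obtain x where "x \<in> V - B" "E u x" "x \<noteq> v" using assms by blast
    then show ?case using force by blast
  qed
qed

lemma cyc_two_neighbours:
  assumes "3 \<le> n" "u < n"
  obtains x1 x2 where "x1 < n" "x2 < n" "x1 \<noteq> x2" "cyc_E n u x1" "cyc_E n u x2"
proof -
  let ?x1 = "if u + 1 = n then 0 else u + 1" and ?x2 = "if u = 0 then n - 1 else u - 1"
  have lt: "?x1 < n" "?x2 < n" and "?x1 \<noteq> ?x2" using assms by auto
  moreover have "cyc_E n u ?x1" "cyc_E n u ?x2"
    unfolding cyc_E_iff[OF assms(2) lt(1)] cyc_E_iff[OF assms(2) lt(2)] using assms by auto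
  ultimately show ?thesis using that by blast
qed

lemma cyc_independent_not_zfs:
  assumes n: "3 \<le> n" and B: "B \<subseteq> cyc_V n" "card B < n"
    and indep: "\<forall>u\<in>B. \<forall>x. cyc_E n u x \<longrightarrow> x \<notin> B"
  shows "\<not> is_zfs (cyc_V n) (cyc_E n) B"
proof
  assume zfs: "is_zfs (cyc_V n) (cyc_E n) B"
  have "\<forall>u\<in>B. \<forall>v. \<exists>x\<in>cyc_V n - B. cyc_E n u x \<and> x \<noteq> v"
  proof (intro ballI allI)
    fix u v assume "u \<in> B"
    then have "u < n" using B(1) by (auto simp: cyc_V_def)
    then obtain x1 x2 where "x1 < n" "x2 < n" "x1 \<noteq> x2" "cyc_E n u x1" "cyc_E n u x2"
      by (rule cyc_two_neighbours[OF n])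
    then show "\<exists>x\<in>cyc_V n - B. cyc_E n u x \<and> x \<noteq> v"
      using indep \<open>u \<in> B\<close> by (cases "x1 = v") (auto simp: cyc_V_def)
  qed
  then have "zf_closure (cyc_V n) (cyc_E n) B \<subseteq> B" by (rule zf_closure_subset_if_blocked)
  then have "cyc_V n \<subseteq> B" using zfs by (auto simp: is_zfs_def)
  then have "card (cyc_V n) \<le> card B" using B by (intro card_mono) (auto simp: cyc_V_def)
  then show False using B by (simp add: cyc_V_def)
qed

lemma cyc_zfs_card_ge_2:
  assumes n: "3 \<le> n" and zfs: "is_zfs (cyc_V n) (cyc_E n) B"
  shows "2 \<le> card B"
proof (rule ccontr)
  assume "\<not> 2 \<le> card B"
  have B: "B \<subseteq> cyc_V n" "finite B" using zfs by (auto simp: is_zfs_def cyc_V_def finite_subset)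
  have "\<forall>u\<in>B. \<forall>x. cyc_E n u x \<longrightarrow> x \<notin> B"
  proof (intro ballI allI impI notI)
    fix u x assume "u \<in> B" "cyc_E n u x" "x \<in> B"
    then have "u \<noteq> x" "{u, x} \<subseteq> B" by (auto simp: cyc_E_def)
    then have "2 \<le> card B" using card_mono[OF B(2), of "{u, x}"] by simp
    then show False using \<open>\<not> 2 \<le> card B\<close> by simp
  qed
  then show False using cyc_independent_not_zfs[OF n B(1)] \<open>\<not> 2 \<le> card B\<close> n zfs by simp
qed

lemma cyc_zfs_card_2_adjacent:
  assumes n: "3 \<le> n" and zfs: "is_zfs (cyc_V n) (cyc_E n) B" and "card B = 2"
  shows "\<exists>j<n. B = {j, (j + 1) mod n}"
proof -
  obtain x y where xy: "B = {x, y}" "x \<noteq> y" using \<open>card B = 2\<close> by (meson card_2_iff)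
  have B: "B \<subseteq> cyc_V n" using zfs by (simp add: is_zfs_def)
  then have "x < n" "y < n" using xy by (auto simp: cyc_V_def)
  show ?thesis
  proof (cases "cyc_E n x y")
    case True
    then have "y = (x + 1) mod n \<or> x = (y + 1) mod n" by (simp add: cyc_E_def)
    then show ?thesis using xy \<open>x < n\<close> \<open>y < n\<close> by blast
  next
    case False
    then have "\<forall>u\<in>B. \<forall>z. cyc_E n u z \<longrightarrow> z \<notin> B"
      using xy by (auto simp: cyc_E_def)
    then show ?thesis using cyc_independent_not_zfs[OF n B] \<open>card B = 2\<close> n zfs by simp
  qed
qed

lemma rot_in_zf_closure_adjacent:
  assumes n: "3 \<le> n" "j < n" and "k < n"
  shows "\<forall>i\<le>k. rot n j i \<in> zf_closure (cyc_V n) (cyc_E n) {j, (j + 1) mod n}"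
  using \<open>k < n\<close>
proof (induction k)
  case 0
  show ?case by (auto simp: rot_0 intro: zf_closure.base)
next
  case (Suc k)
  let ?cl = "zf_closure (cyc_V n) (cyc_E n) {j, (j + 1) mod n}"
  have IH: "\<forall>i\<le>k. rot n j i \<in> ?cl" and k: "k < n" "k + 1 < n" using Suc by auto
  have "rot n j (k + 1) \<in> ?cl"
  proof (rule zf_closure.force)
    show "rot n j k \<in> ?cl" using IH by simp
    show "rot n j (k + 1) \<in> cyc_V n" using rot_lt[OF n(2)] by (simp add: cyc_V_def)
    show "cyc_E n (rot n j k) (rot n j (k + 1))"
      unfolding cyc_E_rot_iff[OF n k] path_E_def using k by simp
    show "\<forall>x\<in>cyc_V n. cyc_E n (rot n j k) x \<and> x \<noteq> rot n j (k + 1) \<longrightarrow> x \<in> ?cl"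
    proof (intro ballI impI)
      fix x assume x: "x \<in> cyc_V n" "cyc_E n (rot n j k) x \<and> x \<noteq> rot n j (k + 1)"
      obtain z where z: "z < n" "x = rot n j z" using rot_surj[OF n(2)] x(1) by (auto simp: cyc_V_def)
      have "path_E n k z \<or> z = n - 1" using cyc_E_rot_iff[OF n k(1) z(1)] x z k by auto
      moreover have "z \<noteq> k + 1" using x z by auto
      ultimately have "z \<le> k \<or> z = n - 1" by (auto simp: path_E_def)
      moreover have "j \<in> ?cl" by (auto intro: zf_closure.base)
      ultimately show "x \<in> ?cl" using IH z rot_last[OF n(2)] by auto
    qed
  qed
  then show ?case using IH by (auto simp: le_Suc_eq)
qed

lemma cyc_adjacent_zfs:
  assumes n: "3 \<le> n" "j < n"
  shows "is_zfs (cyc_V n) (cyc_E n) {j, (j + 1) mod n}"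
proof -
  have "rot n j z \<in> zf_closure (cyc_V n) (cyc_E n) {j, (j + 1) mod n}" if "z < n" for z
    using rot_in_zf_closure_adjacent[OF n that] by blast
  then have "cyc_V n \<subseteq> zf_closure (cyc_V n) (cyc_E n) {j, (j + 1) mod n}"
    using rot_surj[OF n(2)] by (auto simp: cyc_V_def)
  moreover have "{j, (j + 1) mod n} \<subseteq> cyc_V n" using n by (auto simp: cyc_V_def)
  ultimately show ?thesis by (simp add: is_zfs_def)
qed

lemma card_adjacent_pair: "2 \<le> n \<Longrightarrow> (j::nat) < n \<Longrightarrow> card {j, (j + 1) mod n} = 2"
  using add_1_mod_eq[of j n] by auto

lemma zf_number_cycle:
  assumes "3 \<le> n"
  shows "zf_number (cyc_V n) (cyc_E n) = 2"
proof -
  have "finite {B. is_zfs (cyc_V n) (cyc_E n) B}"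
    by (rule finite_subset[of _ "Pow (cyc_V n)"]) (auto simp: is_zfs_def cyc_V_def)
  moreover have "2 \<in> card ` {B. is_zfs (cyc_V n) (cyc_E n) B}"
    using cyc_adjacent_zfs[OF assms, of 0] card_adjacent_pair[of n 0] assms by force
  ultimately show ?thesis
    unfolding zf_number_def using cyc_zfs_card_ge_2[OF assms] by (intro Min_eqI) auto
qed

lemma eptw_graph_cycle:
  assumes n: "3 \<le> n" and C: "\<forall>i<n. 0 < c i \<and> c i < 1"
  shows "eptw_graph (cyc_V n) (cyc_E n) (cyc_W n c) =
          Min ((\<lambda>j. E_path n (\<lambda>i. c ((j + 1 + i) mod n))) ` {..<n})"
proof -
  have minimum: "{B. is_zfs (cyc_V n) (cyc_E n) B \<and> card B = zf_number (cyc_V n) (cyc_E n)}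
     = (\<lambda>j. {j, (j + 1) mod n}) ` {..<n}"
    using cyc_zfs_card_2_adjacent[OF n] cyc_adjacent_zfs[OF n] card_adjacent_pair[of n] n
    unfolding zf_number_cycle[OF n] by auto
  show ?thesis
    unfolding eptw_graph_def minimum image_image using eptw_set_cycle_adjacent[OF n _ C]
    by (intro arg_cong[where f = Min] image_cong) auto
qed

theorem mainTheorem6:
  shows
  "(\<forall>w. (\<forall>i<2. 0 < w i \<and> w i < 1) \<longrightarrow>
        E_path 3 w = 1 / (w 0 + w 1 - w 0 * w 1))
   \<and> (\<forall>n w. 4 \<le> n \<and> (\<forall>i<n - 1. 0 < w i \<and> w i < 1) \<longrightarrow>
        E_path n w =
          (1 + w 0 * (1 - w (n - 2)) * E_path (n - 1) (\<lambda>i. w (i + 1))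
             + (1 - w 0) * w (n - 2) * E_path (n - 1) w
             + w 0 * w (n - 2) * E_path (n - 2) (\<lambda>i. w (i + 1)))
          / (w 0 + w (n - 2) - w 0 * w (n - 2)))
   \<and> (\<forall>n c. 3 \<le> n \<and> (\<forall>i<n. 0 < c i \<and> c i < 1) \<longrightarrow>
        eptw_graph (cyc_V n) (cyc_E n) (cyc_W n c) =
          Min ((\<lambda>j. E_path n (\<lambda>i. c ((j + 1 + i) mod n))) ` {..<n}))"
proof (intro conjI allI impI)
  fix w :: "nat \<Rightarrow> real"
  assume "\<forall>i<2. 0 < w i \<and> w i < 1"
  then have "E_path 3 w =
      (1 + w 0 * (1 - w 1) * E_path 2 (\<lambda>i. w (i + 1)) + (1 - w 0) * w 1 * E_path 2 w
        + w 0 * w 1 * E_path 1 (\<lambda>i. w (i + 1))) / (w 0 + w 1 - w 0 * w 1)"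
    using E_path_recursion[of 3 w] by simp
  then show "E_path 3 w = 1 / (w 0 + w 1 - w 0 * w 1)" by (simp add: E_path_eq_0_if_le_2)
qed (use E_path_recursion eptw_graph_cycle in auto)

end
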